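(* Let $0<q<1$ and $q^*=2-q$. Let $X_1,X_2,\dots,X_n$ be i.i.d. real random variables. Then for all real $x$ and all $a>0$ with $(1-q)ax<1$, $$\mathrm{Prob}\left(\frac1n\sum_{k=1}^nX_k\ge x\right)\le\left[\exp_q(-ax)\right]^nA^n(a),\qquad A(a)=\mathbb{E}\exp_{q^*}(aX_1).$$
   Context: For $q\in(0,2)$, $q\ne1$, the $q$-deformed exponential is $\exp_q(u)=[1+(1-q)u]_+^{1/(1-q)}$ for real $u$ (value in $[0,+\infty]$), where $[u]_+=\max(u,0)$. *)

theory Defs
  imports "HOL-Probability.Probability"
begin

definition qexp :: "real \<Rightarrow> real \<Rightarrow> ennreal" where
  "qexp q u = (let b = max (1 + (1 - q) * u) 0 in
     if b = 0 then (if 1 / (1 - q) > 0 then 0 else \<infinity>)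
     else ennreal (b powr (1 / (1 - q))))"

end

theory Submission
  imports Defs
begin

text \<open>For q < 1, exp_q(u) is a positive power of the affine function 1 + (1 - q) u, so the
  AM-GM inequality gives prod_k exp_q(u_k) \<le> exp_q(v)^n whenever sum_k u_k \<le> n v; moreover
  exp_{2-q}(u) = 1 / exp_q(-u). With u_k = -a X_k and v = -a x this bounds the indicator of the
  event by exp_q(-ax)^n prod_k exp_{2-q}(a X_k), a Markov-type (Chernoff) bound. Integrating,
  independence factorises the expectation and identical distribution makes every factor A(a).\<close>

lemma qexp_eq_powr:
  assumes "q < 1"
  shows "qexp q u = ennreal (max (1 + (1 - q) * u) 0 powr (1 / (1 - q)))"
  using assms unfolding qexp_def Let_def by auto

lemma qexp_less_top:
  assumes "q < 1"
  shows "qexp q u < top"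
  using qexp_eq_powr[OF assms] by simp

lemma qexp_pos:
  assumes "q < 1" "1 + (1 - q) * u > 0"
  shows "qexp q u > 0"
  using assms by (simp add: qexp_eq_powr)

lemma qexp_two_minus_eq_inverse:
  assumes "q < 1"
  shows "qexp (2 - q) u = inverse (qexp q (- u))"
proof (cases "1 - (1 - q) * u > 0")
  case True
  have "1 + (1 - (2 - q)) * u = 1 - (1 - q) * u" "1 / (1 - (2 - q)) = - (1 / (1 - q))"
    using assms by (simp_all add: field_simps)
  then show ?thesis
    using True by (simp add: qexp_def qexp_eq_powr[OF assms] inverse_ennreal powr_minus)
next
  case False
  then show ?thesis
    using assms by (simp add: qexp_def qexp_eq_powr Let_def max_def algebra_simps)
qed

lemma qexp_measurable [measurable]: "qexp q \<in> borel_measurable borel"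
  unfolding qexp_def Let_def by measurable

lemma prod_le_mean_power:
  fixes x :: "'a \<Rightarrow> real"
  assumes "finite S" and nonneg: "\<And>i. i \<in> S \<Longrightarrow> x i \<ge> 0"
    and mean: "(\<Sum>i\<in>S. x i) \<le> real (card S) * s"
  shows "(\<Prod>i\<in>S. x i) \<le> s ^ card S"
proof (cases "S = {}")
  case False
  define m where "m = (\<Sum>i\<in>S. x i / card S)"
  have card_pos: "card S > 0"
    using False \<open>finite S\<close> by (simp add: card_gt_0_iff)
  have "m = (\<Sum>i\<in>S. x i) / card S"
    by (simp add: m_def sum_divide_distrib)
  then have "m \<le> s" "0 \<le> m"
    using mean card_pos nonneg by (simp_all add: divide_le_eq mult.commute sum_nonneg)
  have prod_nonneg: "0 \<le> (\<Prod>i\<in>S. x i)"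
    using nonneg by (simp add: prod_nonneg)
  have "(\<Prod>i\<in>S. x i) = ((\<Prod>i\<in>S. x i) powr (1 / card S)) ^ card S"
    using prod_nonneg card_pos by (simp add: powr_realpow'[symmetric] powr_powr)
  also have "\<dots> \<le> m ^ card S"
    using arith_geom_mean[OF \<open>finite S\<close> False nonneg] by (simp add: m_def power_mono)
  also have "\<dots> \<le> s ^ card S"
    using \<open>m \<le> s\<close> \<open>0 \<le> m\<close> by (rule power_mono)
  finally show ?thesis .
qed simp

lemma prod_qexp_le_qexp_power:
  assumes "q < 1" "finite I" and mean: "(\<Sum>k\<in>I. u k) \<le> real (card I) * v"
  shows "(\<Prod>k\<in>I. qexp q (u k)) \<le> qexp q v ^ card I"
proof (cases "\<exists>k\<in>I. 1 + (1 - q) * u k \<le> 0")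
  case True
  then have "(\<Prod>k\<in>I. qexp q (u k)) = 0"
    using assms by (auto simp: qexp_eq_powr max_def)
  then show ?thesis by (metis zero_le)
next
  case False
  define p where "p = 1 / (1 - q)"
  define b where "b k = 1 + (1 - q) * u k" for k
  define c where "c = 1 + (1 - q) * v"
  have b_pos: "b k > 0" if "k \<in> I" for k
    using False that by (auto simp: b_def)
  have "(\<Sum>k\<in>I. b k) = real (card I) + (1 - q) * (\<Sum>k\<in>I. u k)"
    by (simp add: b_def sum.distrib sum_distrib_left)
  also have "\<dots> \<le> real (card I) + (1 - q) * (real (card I) * v)"
    using mean \<open>q < 1\<close> by (simp add: mult_left_mono)
  also have "\<dots> = real (card I) * c"
    by (simp add: c_def algebra_simps)
  finally have sum_le: "(\<Sum>k\<in>I. b k) \<le> real (card I) * c" .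
  have prod_le: "(\<Prod>k\<in>I. b k) \<le> c ^ card I"
    using prod_le_mean_power[OF \<open>finite I\<close> _ sum_le] b_pos by (simp add: less_imp_le)
  have c_pos: "c > 0" if "I \<noteq> {}"
  proof -
    have "0 < (\<Sum>k\<in>I. b k)"
      using b_pos that \<open>finite I\<close> by (intro sum_pos)
    then have "0 < real (card I) * c"
      using sum_le by linarith
    then show ?thesis
      by (auto simp: zero_less_mult_iff)
  qed
  have "(\<Prod>k\<in>I. qexp q (u k)) = (\<Prod>k\<in>I. ennreal (b k powr p))"
    using b_pos \<open>q < 1\<close> by (intro prod.cong) (auto simp: qexp_eq_powr b_def p_def)
  also have "\<dots> = ennreal ((\<Prod>k\<in>I. b k) powr p)"
    using b_pos by (simp add: prod_ennreal prod_powr_distrib less_imp_le)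
  also have "\<dots> \<le> ennreal ((c ^ card I) powr p)"
    using prod_le b_pos
    by (intro ennreal_leI powr_mono2) (auto simp: p_def \<open>q < 1\<close> prod_nonneg less_imp_le)
  also have "\<dots> = qexp q v ^ card I"
    using c_pos \<open>q < 1\<close>
    by (cases "I = {}")
      (auto simp: qexp_eq_powr c_def p_def ennreal_power powr_power powr_realpow[symmetric] powr_powr)
  finally show ?thesis .
qed

lemma prod_less_top_ennreal:
  fixes f :: "'a \<Rightarrow> ennreal"
  assumes "\<And>i. i \<in> I \<Longrightarrow> f i < top"
  shows "(\<Prod>i\<in>I. f i) < top"
  using assms by (induction I rule: infinite_finite_induct) (simp_all add: ennreal_mult_less_top)

lemma prod_inverse_ennreal:
  fixes f :: "'a \<Rightarrow> ennreal"
  assumes "\<And>i. i \<in> I \<Longrightarrow> f i < top"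
  shows "(\<Prod>i\<in>I. inverse (f i)) = inverse (\<Prod>i\<in>I. f i)"
  using assms
proof (induction I rule: infinite_finite_induct)
  case (insert i I)
  have "(\<Prod>i\<in>I. f i) < top"
    using insert.prems by (intro prod_less_top_ennreal) simp
  then show ?case
    using insert by (simp add: ennreal_inverse_mult)
qed simp_all

lemma one_le_mult_inverse_ennreal:
  fixes a c :: ennreal
  assumes "a \<le> c" "a < top" "0 < c"
  shows "1 \<le> c * inverse a"
proof (cases "a = 0")
  case True
  then show ?thesis
    using \<open>0 < c\<close> by (simp add: ennreal_mult_top)
next
  case False
  then have "1 = a * inverse a"
    using ennreal_divide_self[of a] \<open>a < top\<close> by (simp add: divide_ennreal_def)
  also have "\<dots> \<le> c * inverse a"
    using \<open>a \<le> c\<close> by (rule mult_right_mono) simp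
  finally show ?thesis .
qed

lemma one_le_qexp_power_mult_prod_qexp_dual:
  fixes y :: "'i \<Rightarrow> real"
  assumes "q < 1" "a \<ge> 0" "(1 - q) * a * x < 1" "finite I"
    and mean: "real (card I) * x \<le> (\<Sum>k\<in>I. y k)"
  shows "1 \<le> qexp q (- a * x) ^ card I * (\<Prod>k\<in>I. qexp (2 - q) (a * y k))"
proof -
  have "0 < qexp q (- a * x)"
    using assms by (intro qexp_pos) (simp_all add: algebra_simps)
  then have C_pos: "0 < qexp q (- a * x) ^ card I"
    by (metis not_gr_zero power_not_zero)
  have "(\<Sum>k\<in>I. - (a * y k)) = - a * (\<Sum>k\<in>I. y k)"
    by (simp add: sum_distrib_left sum_negf)
  also have "\<dots> \<le> real (card I) * (- a * x)"
    using mult_left_mono[OF mean \<open>a \<ge> 0\<close>] by (simp add: algebra_simps)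
  finally have "(\<Prod>k\<in>I. qexp q (- (a * y k))) \<le> qexp q (- a * x) ^ card I"
    using assms by (intro prod_qexp_le_qexp_power)
  moreover have "(\<Prod>k\<in>I. qexp q (- (a * y k))) < top"
    using qexp_less_top[OF \<open>q < 1\<close>] by (rule prod_less_top_ennreal)
  ultimately have "1 \<le> qexp q (- a * x) ^ card I * inverse (\<Prod>k\<in>I. qexp q (- (a * y k)))"
    using C_pos by (rule one_le_mult_inverse_ennreal)
  also have "inverse (\<Prod>k\<in>I. qexp q (- (a * y k))) = (\<Prod>k\<in>I. qexp (2 - q) (a * y k))"
    using qexp_less_top[OF \<open>q < 1\<close>]
    by (simp add: prod_inverse_ennreal[symmetric] qexp_two_minus_eq_inverse[OF \<open>q < 1\<close>])
  finally show ?thesis .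
qed

lemma (in prob_space) nn_integral_prod_indep_identically_distributed:
  fixes X :: "'i \<Rightarrow> 'a \<Rightarrow> 'b" and g :: "'b \<Rightarrow> ennreal"
  assumes "finite I" "j \<in> I" and indep: "indep_vars (\<lambda>_. N) X I"
    and ident: "\<And>k. k \<in> I \<Longrightarrow> distr M N (X k) = distr M N (X j)"
    and g: "g \<in> borel_measurable N"
  shows "(\<integral>\<^sup>+\<omega>. (\<Prod>k\<in>I. g (X k \<omega>)) \<partial>M) = (\<integral>\<^sup>+\<omega>. g (X j \<omega>) \<partial>M) ^ card I"
proof -
  have rv: "X k \<in> measurable M N" if "k \<in> I" for k
    using indep that by (simp add: indep_vars_def)
  have "indep_vars (\<lambda>_. borel) (\<lambda>k \<omega>. g (X k \<omega>)) I"
    using indep g by (rule indep_vars_compose2)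
  then have "(\<integral>\<^sup>+\<omega>. (\<Prod>k\<in>I. g (X k \<omega>)) \<partial>M) = (\<Prod>k\<in>I. \<integral>\<^sup>+\<omega>. g (X k \<omega>) \<partial>M)"
    using \<open>finite I\<close> by (intro indep_vars_nn_integral) auto
  also have "\<dots> = (\<Prod>k\<in>I. \<integral>\<^sup>+\<omega>. g (X j \<omega>) \<partial>M)"
  proof (rule prod.cong)
    fix k assume "k \<in> I"
    have "(\<integral>\<^sup>+\<omega>. g (X k \<omega>) \<partial>M) = (\<integral>\<^sup>+u. g u \<partial>distr M N (X k))"
      using rv[OF \<open>k \<in> I\<close>] g by (simp add: nn_integral_distr)
    also have "\<dots> = (\<integral>\<^sup>+\<omega>. g (X j \<omega>) \<partial>M)"
      using ident[OF \<open>k \<in> I\<close>] rv[OF \<open>j \<in> I\<close>] g by (simp add: nn_integral_distr)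
    finally show "(\<integral>\<^sup>+\<omega>. g (X k \<omega>) \<partial>M) = (\<integral>\<^sup>+\<omega>. g (X j \<omega>) \<partial>M)" .
  qed simp
  finally show ?thesis
    by simp
qed

theorem proposition3:
  fixes M :: "'a measure" and X :: "nat \<Rightarrow> 'a \<Rightarrow> real"
    and q x a :: real and n :: nat
  assumes "prob_space M"
    and "0 < q" and "q < 1"
    and "n \<ge> 1"
    and rv: "\<And>k. k \<in> {1..n} \<Longrightarrow> X k \<in> borel_measurable M"
    and indep: "prob_space.indep_vars M (\<lambda>_. borel) X {1..n}"
    and ident: "\<And>k. k \<in> {1..n} \<Longrightarrow> distr M borel (X k) = distr M borel (X 1)"
    and "a > 0" and "(1 - q) * a * x < 1"
  shows "emeasure M {\<omega> \<in> space M. (1 / real n) * (\<Sum>k=1..n. X k \<omega>) \<ge> x}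
         \<le> (qexp q (- a * x)) ^ n * (\<integral>\<^sup>+ \<omega>. qexp (2 - q) (a * X 1 \<omega>) \<partial>M) ^ n"
proof -
  interpret prob_space M by fact
  let ?E = "{\<omega> \<in> space M. (1 / real n) * (\<Sum>k=1..n. X k \<omega>) \<ge> x}"
  let ?C = "qexp q (- a * x) ^ n"
  have "?E \<in> sets M"
    using rv by measurable
  have indicator_le: "indicator ?E \<omega> \<le> ?C * (\<Prod>k\<in>{1..n}. qexp (2 - q) (a * X k \<omega>))" for \<omega>
  proof (cases "\<omega> \<in> ?E")
    case True
    then have "real (card {1..n}) * x \<le> (\<Sum>k=1..n. X k \<omega>)"
      using \<open>n \<ge> 1\<close> by (simp add: field_simps)
    with one_le_qexp_power_mult_prod_qexp_dual[of q a x "{1..n}" "\<lambda>k. X k \<omega>"] assms True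
    show ?thesis
      by simp
  qed simp
  have "emeasure M ?E = (\<integral>\<^sup>+\<omega>. indicator ?E \<omega> \<partial>M)"
    using \<open>?E \<in> sets M\<close> by simp
  also have "\<dots> \<le> (\<integral>\<^sup>+\<omega>. ?C * (\<Prod>k\<in>{1..n}. qexp (2 - q) (a * X k \<omega>)) \<partial>M)"
    using indicator_le by (rule nn_integral_mono)
  also have "\<dots> = ?C * (\<integral>\<^sup>+\<omega>. (\<Prod>k\<in>{1..n}. qexp (2 - q) (a * X k \<omega>)) \<partial>M)"
    using rv by (intro nn_integral_cmult) measurable
  also have "(\<integral>\<^sup>+\<omega>. (\<Prod>k\<in>{1..n}. qexp (2 - q) (a * X k \<omega>)) \<partial>M)
      = (\<integral>\<^sup>+\<omega>. qexp (2 - q) (a * X 1 \<omega>) \<partial>M) ^ n"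
    using nn_integral_prod_indep_identically_distributed[OF _ _ indep ident,
        where g = "\<lambda>u. qexp (2 - q) (a * u)"] \<open>n \<ge> 1\<close>
    by simp
  finally show ?thesis .
qed

end
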